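(* Let $n\geq 1$. The symmetric group $\mathfrak{S}_{n+1}$ admits the presentation $$\langle r_1,\dots,r_n\mid r_1^2=1,\ \ r_1r_jr_i=r_{i+1}r_j\ \text{for } 1\leq i<j\leq n\rangle,$$ where $r_i$ corresponds to the cycle $(1,2,\dots,i+1)$ for $1\leq i\leq n$. *)

theory Defs
  imports "HOL-Algebra.Sym_Groups"
begin

definition pres_rels :: "('a, 'b) monoid_scheme \<Rightarrow> nat \<Rightarrow> (nat \<Rightarrow> 'a) \<Rightarrow> bool" where
  "pres_rels G n g \<longleftrightarrow>
     g 1 \<otimes>\<^bsub>G\<^esub> g 1 = \<one>\<^bsub>G\<^esub> \<and>
     (\<forall>i j. 1 \<le> i \<and> i < j \<and> j \<le> n \<longrightarrow>
        g 1 \<otimes>\<^bsub>G\<^esub> g j \<otimes>\<^bsub>G\<^esub> g i = g (Suc i) \<otimes>\<^bsub>G\<^esub> g j)"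

definition rcyc :: "nat \<Rightarrow> nat \<Rightarrow> nat" where
  "rcyc i = cycle_of_list [1..<i+2]"

end

theory Submission
  imports Defs
begin

text \<open>
  The cycles rcyc i satisfy the relations, and they generate the symmetric group because
  rcyc (a - 1)\<inverse> \<circ> rcyc a is the transposition (a, a + 1). For the universal property it suffices
  that elements g 1, ..., g n satisfying the relations in any group generate a subgroup of order at
  most (n + 1)!: applied to the pairs (rcyc i, h i) in the product of the symmetric group with H,
  this bound makes the subgroup they generate the graph of a homomorphism. The bound is a coset
  enumeration. Let K m be the subgroup generated by g 1, ..., g m. The relations force
  g m [^] (m + 1) = \<one> and make K (m - 1) {\<one>, g m, ..., g m [^] m} closed under right
  multiplication by g 1, ..., g m, so |K m| \<le> (m + 1) |K (m - 1)|.
\<close>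

section \<open>The cycles generate the symmetric group\<close>

lemma cycle_of_list_upt_apply:
  "cycle_of_list [a..<a + Suc d] x = (if a \<le> x \<and> x < a + d then Suc x else if x = a + d then a else x)"
proof (induction d arbitrary: a)
  case 0
  then show ?case by simp
next
  case (Suc d)
  have "[a..<a + Suc (Suc d)] = a # [Suc a..<Suc a + Suc d]"
    and "[Suc a..<Suc a + Suc d] = Suc a # [Suc (Suc a)..<Suc a + Suc d]"
    by (simp_all add: upt_rec)
  then have "cycle_of_list [a..<a + Suc (Suc d)] x
      = transpose a (Suc a) (cycle_of_list [Suc a..<Suc a + Suc d] x)"
    by simp
  then show ?case
    using Suc[of "Suc a"] by (auto simp: transpose_def)
qed

lemma rcyc_apply: "rcyc i x = (if 1 \<le> x \<and> x \<le> i then Suc x else if x = Suc i then 1 else x)"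
  unfolding rcyc_def using cycle_of_list_upt_apply[of 1 i x] by (auto simp: add.commute)

lemma rcyc_0: "rcyc 0 = id"
  by (auto simp: fun_eq_iff rcyc_apply)

lemma rcyc_in_sym_group: "i < n \<Longrightarrow> rcyc i \<in> carrier (sym_group n)"
  unfolding sym_group_carrier rcyc_def
  by (rule permutes_subset[OF cycle_permutes]) auto

lemma rcyc_pres_rels: "pres_rels (sym_group (Suc n)) n rcyc"
  unfolding pres_rels_def sym_group_mult sym_group_one
  by (auto simp: fun_eq_iff rcyc_apply)

lemma rcyc_comp_transpose: "1 \<le> a \<Longrightarrow> rcyc (a - 1) \<circ> transpose a (Suc a) = rcyc a"
  by (auto simp: fun_eq_iff rcyc_apply transpose_def)

lemma transpose_conj_adjacent:
  "a < b \<Longrightarrow> transpose a (Suc b) = transpose b (Suc b) \<circ> transpose a b \<circ> transpose b (Suc b)"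
  by (auto simp: fun_eq_iff transpose_def)

lemma sym_group_generate_adjacent_transpositions:
  "generate (sym_group n) ((\<lambda>a. transpose a (Suc a)) ` {1..<n}) = carrier (sym_group n)"
  (is "?T = _")
proof
  interpret group "sym_group n" by (rule sym_group_is_group)
  have "(\<lambda>a. transpose a (Suc a)) ` {1..<n} \<subseteq> carrier (sym_group n)"
    by (auto simp: sym_group_carrier intro!: permutes_swap_id)
  then show "?T \<subseteq> carrier (sym_group n)"
    using generate_in_carrier by blast
next
  have transpose_in: "transpose a b \<in> ?T" if "1 \<le> a" "a < b" "b \<le> n" for a b
    using that
  proof (induction b)
    case 0
    then show ?case by simp
  next
    case (Suc b)
    show ?case
    proof (cases "a = b")
      case True
      then show ?thesis
        using Suc.prems by (auto intro: generate.incl)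
    next
      case False
      have "transpose b (Suc b) \<in> ?T"
        using Suc.prems False by (intro generate.incl) auto
      moreover have "transpose a b \<in> ?T"
        using Suc False by simp
      ultimately have "transpose b (Suc b) \<circ> transpose a b \<circ> transpose b (Suc b) \<in> ?T"
        by (metis generate.eng sym_group_mult)
      moreover have "a < b"
        using False Suc.prems by simp
      ultimately show ?thesis
        by (simp only: transpose_conj_adjacent)
    qed
  qed
  show "carrier (sym_group n) \<subseteq> ?T"
  proof
    fix p
    assume "p \<in> carrier (sym_group n)"
    then have "p permutes {1..n}"
      by (simp add: sym_group_carrier)
    from this finite_atLeastAtMost show "p \<in> ?T"
    proof (induction rule: permutes_induct)
      case id
      then show ?case
        using generate.one[of "sym_group n"] by (simp only: sym_group_one)
    next
      case (swap a b p)
      have "transpose a b \<in> ?T"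
        using transpose_in[of a b] transpose_in[of b a] swap.hyps
        by (cases "a < b") (auto simp: transpose_commute)
      then have "transpose a b \<otimes>\<^bsub>sym_group n\<^esub> p \<in> ?T"
        using swap.IH by (rule generate.eng)
      then show ?case
        by (simp only: sym_group_mult)
    qed
  qed
qed

lemma adjacent_transposition_in_generate_rcyc:
  assumes "1 \<le> a" "a \<le> n"
  shows "transpose a (Suc a) \<in> generate (sym_group (Suc n)) (rcyc ` {1..n})"
    (is "_ \<in> ?R")
proof (cases "a = 1")
  case True
  then show ?thesis
    using rcyc_comp_transpose[of 1] rcyc_0 assms by (auto intro: generate.incl)
next
  case False
  interpret group "sym_group (Suc n)" by (rule sym_group_is_group)
  have rcyc_carrier: "rcyc (a - 1) \<in> carrier (sym_group (Suc n))" "rcyc a \<in> carrier (sym_group (Suc n))"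
    using assms by (auto intro: rcyc_in_sym_group)
  have "transpose a (Suc a) \<in> carrier (sym_group (Suc n))"
    using assms by (auto simp: sym_group_carrier intro: permutes_swap_id)
  then have "transpose a (Suc a) = inv\<^bsub>sym_group (Suc n)\<^esub> rcyc (a - 1) \<otimes>\<^bsub>sym_group (Suc n)\<^esub> rcyc a"
    using inv_solve_left[OF _ rcyc_carrier] rcyc_comp_transpose[OF assms(1)]
    by (simp add: sym_group_mult)
  moreover have "inv\<^bsub>sym_group (Suc n)\<^esub> rcyc (a - 1) \<otimes>\<^bsub>sym_group (Suc n)\<^esub> rcyc a \<in> ?R"
    using assms False by (intro generate.eng generate.inv generate.incl imageI) auto
  ultimately show ?thesis
    by simp
qed

lemma generate_rcyc: "generate (sym_group (Suc n)) (rcyc ` {1..n}) = carrier (sym_group (Suc n))"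
proof
  interpret group "sym_group (Suc n)" by (rule sym_group_is_group)
  have "rcyc ` {1..n} \<subseteq> carrier (sym_group (Suc n))"
    by (auto intro: rcyc_in_sym_group)
  then show "generate (sym_group (Suc n)) (rcyc ` {1..n}) \<subseteq> carrier (sym_group (Suc n))"
    using generate_in_carrier by blast
  have "carrier (sym_group (Suc n)) = generate (sym_group (Suc n)) ((\<lambda>a. transpose a (Suc a)) ` {1..<Suc n})"
    by (rule sym_group_generate_adjacent_transpositions[symmetric])
  also have "\<dots> \<subseteq> generate (sym_group (Suc n)) (rcyc ` {1..n})"
    using adjacent_transposition_in_generate_rcyc
    by (intro generate_subgroup_incl generate_is_subgroup) (auto intro: rcyc_in_sym_group)
  finally show "carrier (sym_group (Suc n)) \<subseteq> generate (sym_group (Suc n)) (rcyc ` {1..n})" .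
qed

section \<open>Homomorphisms as graphs\<close>

lemma hom_eq_on_generate:
  assumes "group G" "group H" "f \<in> hom G H" "f' \<in> hom G H" "A \<subseteq> carrier G"
    and "\<And>a. a \<in> A \<Longrightarrow> f a = f' a" and "x \<in> generate G A"
  shows "f x = f' x"
proof -
  interpret f: group_hom G H f
    using assms(1-3) by (simp add: group_hom_def group_hom_axioms_def)
  interpret f': group_hom G H f'
    using assms(1,2,4) by (simp add: group_hom_def group_hom_axioms_def)
  show ?thesis
    using assms(7)
  proof (induction x rule: generate.induct)
    case (incl a)
    then show ?case using assms(6) by simp
  next
    case (inv a)
    then show ?case using assms(5,6) by auto
  next
    case (eng x y)
    then have "x \<in> carrier G" "y \<in> carrier G"
      using f.G.generate_in_carrier[OF assms(5)] by auto
    then show ?case using eng.IH by simp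
  qed simp
qed

lemma ex1_extensional_hom:
  assumes S: "group S" and H: "group H" and s: "s ` I \<subseteq> carrier S"
    and gen: "generate S (s ` I) = carrier S"
    and f: "f \<in> hom S H" "\<forall>i\<in>I. f (s i) = h i"
  shows "\<exists>!\<phi>. \<phi> \<in> hom S H \<and> (\<forall>x. x \<notin> carrier S \<longrightarrow> \<phi> x = undefined) \<and> (\<forall>i\<in>I. \<phi> (s i) = h i)"
proof (rule ex1I)
  show "restrict f (carrier S) \<in> hom S H \<and> (\<forall>x. x \<notin> carrier S \<longrightarrow> restrict f (carrier S) x = undefined)
      \<and> (\<forall>i\<in>I. restrict f (carrier S) (s i) = h i)"
    using group.hom_restrict[OF S f(1)] f(2) s by auto
next
  fix \<psi>
  assume \<psi>: "\<psi> \<in> hom S H \<and> (\<forall>x. x \<notin> carrier S \<longrightarrow> \<psi> x = undefined) \<and> (\<forall>i\<in>I. \<psi> (s i) = h i)"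
  show "\<psi> = restrict f (carrier S)"
  proof
    fix x
    show "\<psi> x = restrict f (carrier S) x"
    proof (cases "x \<in> carrier S")
      case True
      then have "x \<in> generate S (s ` I)"
        using gen by simp
      moreover have "\<psi> a = f a" if "a \<in> s ` I" for a
        using that \<psi> f(2) by auto
      ultimately show ?thesis
        using hom_eq_on_generate[OF S H _ f(1) s] \<psi> True by simp
    next
      case False
      then show ?thesis
        using \<psi> by simp
    qed
  qed
qed

text \<open>K projects onto S; being no larger than S it projects bijectively, so it is the graph of
  the required homomorphism.\<close>
lemma ex_hom_of_small_graph:
  fixes S :: "('a, 'b) monoid_scheme" and H :: "('c, 'd) monoid_scheme"
    and s :: "'i \<Rightarrow> 'a" and h :: "'i \<Rightarrow> 'c" and I :: "'i set"
  defines "K \<equiv> generate (S \<times>\<times> H) ((\<lambda>i. (s i, h i)) ` I)"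
  assumes S: "group S" and H: "group H"
    and s: "s ` I \<subseteq> carrier S" and h: "h ` I \<subseteq> carrier H"
    and gen: "generate S (s ` I) = carrier S"
    and K_finite: "finite K" and K_card: "card K \<le> order S"
  shows "\<exists>f. f \<in> hom S H \<and> (\<forall>i\<in>I. f (s i) = h i)"
proof -
  let ?D = "S \<times>\<times> H"
  let ?A = "(\<lambda>i. (s i, h i)) ` I"
  interpret D: group ?D
    using S H by (rule DirProd_group)
  have A: "?A \<subseteq> carrier ?D"
    using s h by auto
  have fst_hom: "fst \<in> hom ?D S" and snd_hom: "snd \<in> hom ?D H"
    by (auto simp: hom_def mult_DirProd')
  have "group_hom ?D S fst"
    using S fst_hom by (simp add: group_hom_def group_hom_axioms_def D.group_axioms)
  then have "fst ` K = generate S (fst ` ?A)"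
    unfolding K_def using A by (rule group_hom.generate_img[symmetric])
  also have "fst ` ?A = s ` I"
    by (simp add: image_image)
  finally have fst_K: "fst ` K = carrier S"
    using gen by simp
  have inj: "inj_on fst K"
    using K_finite card_image_le[OF K_finite, of fst] K_card fst_K
    by (intro eq_card_imp_inj_on) (simp_all add: order_def)
  have carrier_KG: "carrier (subgroup_generated ?D ?A) = K"
    using A by (simp add: carrier_subgroup_generated K_def Int_absorb1)
  then have fst_iso: "fst \<in> iso (subgroup_generated ?D ?A) S"
    using inj fst_K D.hom_from_subgroup_generated[OF fst_hom] by (simp add: iso_iff)
  have "inv_into K fst \<in> hom S (subgroup_generated ?D ?A)"
    using group.iso_set_sym[OF D.group_subgroup_generated fst_iso] carrier_KG
    by (simp add: iso_imp_homomorphism)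
  then have "snd \<circ> inv_into K fst \<in> hom S H"
    using hom_compose D.hom_from_subgroup_generated[OF snd_hom] by blast
  moreover have "(snd \<circ> inv_into K fst) (s i) = h i" if "i \<in> I" for i
  proof -
    have "(s i, h i) \<in> K"
      using that unfolding K_def by (intro generate.incl) auto
    then show ?thesis
      using inv_into_f_eq[OF inj] by simp
  qed
  ultimately show ?thesis
    by blast
qed

section \<open>Order bound for groups satisfying the relations\<close>

lemma (in group) nat_pow_conj:
  assumes "u \<in> carrier G" "w \<in> carrier G"
  shows "(inv u \<otimes> w \<otimes> u) [^] (k::nat) = inv u \<otimes> w [^] k \<otimes> u"
proof (induction k)
  case 0
  then show ?case using assms by simp
next
  case (Suc k)
  have cancel: "u \<otimes> (inv u \<otimes> z) = z" if "z \<in> carrier G" for z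
    using assms that by (simp add: m_assoc[symmetric])
  show ?case
    using Suc assms by (simp add: m_assoc cancel)
qed

lemma (in group) conj_eq_one_iff:
  assumes "u \<in> carrier G" "w \<in> carrier G"
  shows "inv u \<otimes> w \<otimes> u = \<one> \<longleftrightarrow> w = \<one>"
  using assms by (metis l_inv l_cancel_one inv_closed m_closed right_cancel)

locale pres_rels_group = group G for G (structure) +
  fixes n :: nat and g :: "nat \<Rightarrow> 'a"
  assumes n_pos: "1 \<le> n"
    and g_closed: "\<And>i. 1 \<le> i \<Longrightarrow> i \<le> n \<Longrightarrow> g i \<in> carrier G"
    and rels: "pres_rels G n g"
begin

lemma g_1_closed: "g 1 \<in> carrier G"
  using g_closed n_pos by simp

lemma g_1_sq: "g 1 \<otimes> g 1 = \<one>"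
  using rels by (simp add: pres_rels_def)

lemma g_1_cancel: "z \<in> carrier G \<Longrightarrow> g 1 \<otimes> (g 1 \<otimes> z) = z"
  by (metis g_1_sq g_1_closed l_one m_assoc)

lemma g_swap:
  assumes "1 \<le> i" "i < j" "j \<le> n"
  shows "g j \<otimes> g i = g 1 \<otimes> (g (Suc i) \<otimes> g j)"
proof -
  have closed: "g i \<in> carrier G" "g j \<in> carrier G" "g (Suc i) \<in> carrier G"
    using g_closed assms by auto
  have "g j \<otimes> g i = g 1 \<otimes> (g 1 \<otimes> (g j \<otimes> g i))"
    using closed by (simp only: g_1_cancel m_closed)
  also have "g 1 \<otimes> (g j \<otimes> g i) = g (Suc i) \<otimes> g j"
    using rels assms closed unfolding pres_rels_def by (metis g_1_closed m_assoc)
  finally show ?thesis .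
qed

text \<open>By g_swap, each further factor g 1 \<otimes> g j turns g i \<otimes> g j [^] (i + 1) into
  g (i + 1) \<otimes> g j [^] (i + 2).\<close>
lemma g_sweep:
  assumes "k < j" "j \<le> n"
  shows "(g 1 \<otimes> g j) [^] k \<otimes> (g 1 \<otimes> g j [^] (2::nat)) = g (Suc k) \<otimes> g j [^] Suc (Suc k)"
  using assms(1)
proof (induction k)
  case 0
  then show ?case
    using assms g_closed[of j] g_1_closed by (simp add: numeral_2_eq_2)
next
  case (Suc k)
  define a x where "a = g 1" and "x = g j"
  have closed: "a \<in> carrier G" "x \<in> carrier G" "g (Suc k) \<in> carrier G" "g (Suc (Suc k)) \<in> carrier G"
    using g_closed Suc.prems assms unfolding a_def x_def by auto
  let ?R = "a \<otimes> x [^] (2::nat)"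
  have "(a \<otimes> x) [^] Suc k \<otimes> ?R = a \<otimes> (x \<otimes> ((a \<otimes> x) [^] k \<otimes> ?R))"
    using closed nat_pow_Suc2[of "a \<otimes> x" k] by (simp add: m_assoc)
  also have "\<dots> = a \<otimes> ((x \<otimes> g (Suc k)) \<otimes> x [^] Suc (Suc k))"
    using Suc closed unfolding a_def x_def by (simp add: m_assoc)
  also have "x \<otimes> g (Suc k) = a \<otimes> (g (Suc (Suc k)) \<otimes> x)"
    using g_swap[of "Suc k" j] Suc.prems assms unfolding a_def x_def by simp
  also have "a \<otimes> ((a \<otimes> (g (Suc (Suc k)) \<otimes> x)) \<otimes> x [^] Suc (Suc k))
      = a \<otimes> (a \<otimes> (g (Suc (Suc k)) \<otimes> (x \<otimes> x [^] Suc (Suc k))))"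
    using closed by (simp add: m_assoc del: nat_pow_Suc)
  also have "\<dots> = g (Suc (Suc k)) \<otimes> x [^] Suc (Suc (Suc k))"
    using closed nat_pow_Suc2[of x "Suc (Suc k)"] by (simp add: g_1_cancel[folded a_def])
  finally show ?case
    unfolding a_def x_def .
qed

text \<open>g m is conjugate to g 1 \<otimes> g (m + 1) by g (m + 1); so by induction the latter has order
  dividing m + 1, and g_sweep with k = m turns this into g (m + 1) [^] (m + 2) = \<one>.\<close>
lemma g_pow_order:
  assumes "1 \<le> m" "m \<le> n"
  shows "g m [^] Suc m = \<one>"
  using assms
proof (induction m rule: nat_induct_at_least)
  case base
  then show ?case
    using g_1_sq g_1_closed by (simp add: numeral_2_eq_2)
next
  case (Suc m)
  define a x y where "a = g 1" and "x = g (Suc m)" and "y = g m"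
  have closed: "a \<in> carrier G" "x \<in> carrier G" "y \<in> carrier G"
    using g_closed Suc unfolding a_def x_def y_def by auto
  have "x \<otimes> y = a \<otimes> (x \<otimes> x)"
    using g_swap[of m "Suc m"] Suc unfolding a_def x_def y_def by simp
  then have y_conj: "y = inv x \<otimes> (a \<otimes> x) \<otimes> x"
    using closed by (simp add: inv_solve_left m_assoc)
  have "inv x \<otimes> (a \<otimes> x) [^] Suc m \<otimes> x = y [^] Suc m"
    unfolding y_conj using closed by (simp only: nat_pow_conj m_closed)
  also have "\<dots> = \<one>"
    using Suc unfolding y_def by simp
  finally have ax_order: "(a \<otimes> x) [^] Suc m = \<one>"
    using closed conj_eq_one_iff by simp
  have "x \<otimes> x [^] Suc (Suc m) = (a \<otimes> x) [^] m \<otimes> (a \<otimes> x [^] (2::nat))"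
    using g_sweep[of m "Suc m"] Suc unfolding a_def x_def by simp
  also have "\<dots> = (a \<otimes> x) [^] Suc m \<otimes> x"
    using closed by (simp add: numeral_2_eq_2 m_assoc)
  finally have "x \<otimes> x [^] Suc (Suc m) = x"
    using ax_order closed by simp
  then show ?case
    using closed l_cancel_one[of x "x [^] Suc (Suc m)"] unfolding x_def by simp
qed

definition gens_upto :: "nat \<Rightarrow> 'a set" where
  "gens_upto m = generate G (g ` {1..m})"

lemma gens_upto_subgroup: "m \<le> n \<Longrightarrow> subgroup (gens_upto m) G"
  unfolding gens_upto_def using g_closed by (intro generate_is_subgroup) auto

lemma g_in_gens_upto: "1 \<le> i \<Longrightarrow> i \<le> m \<Longrightarrow> g i \<in> gens_upto m"
  unfolding gens_upto_def by (rule generate.incl) auto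

lemma pow_Suc_mult_g:
  assumes "1 \<le> i" "i < m" "m \<le> n" "k1 \<in> carrier G" "k2 \<in> carrier G"
    and "g m [^] j \<otimes> g 1 = k1 \<otimes> g m [^] j"
    and "g m [^] j \<otimes> g (Suc i) = k2 \<otimes> g m [^] e"
  shows "g m [^] Suc j \<otimes> g i = (k1 \<otimes> k2) \<otimes> g m [^] Suc e"
proof -
  define a x where "a = g 1" and "x = g m"
  have closed: "a \<in> carrier G" "x \<in> carrier G" "g i \<in> carrier G" "g (Suc i) \<in> carrier G"
    using g_1_closed g_closed assms unfolding a_def x_def by auto
  have "x [^] Suc j \<otimes> g i = x [^] j \<otimes> (x \<otimes> g i)"
    using closed by (simp add: m_assoc)
  also have "x \<otimes> g i = a \<otimes> (g (Suc i) \<otimes> x)"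
    using g_swap assms unfolding a_def x_def by simp
  also have "x [^] j \<otimes> (a \<otimes> (g (Suc i) \<otimes> x)) = (x [^] j \<otimes> a) \<otimes> g (Suc i) \<otimes> x"
    using closed by (simp add: m_assoc)
  also have "\<dots> = k1 \<otimes> (x [^] j \<otimes> g (Suc i)) \<otimes> x"
    using assms(4,6) closed unfolding a_def x_def by (simp add: m_assoc)
  also have "\<dots> = (k1 \<otimes> k2) \<otimes> x [^] Suc e"
    using assms(4,5,7) closed unfolding x_def by (simp add: m_assoc)
  finally show ?thesis
    unfolding x_def .
qed

lemma pow_mult_g:
  assumes "m \<le> n" "1 \<le> i" "i \<le> m" "j < m"
  shows "\<exists>k\<in>gens_upto (m - 1). g m [^] j \<otimes> g i = k \<otimes> g m [^] (if i + j < m then j else Suc j)"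
  using assms(2-4)
proof (induction j arbitrary: i)
  case 0
  show ?case
  proof (cases "i = m")
    case True
    then show ?thesis
      using gens_upto_subgroup[of "m - 1"] g_closed[of m] assms(1) 0
      by (intro bexI[of _ \<one>]) (auto intro: subgroup.one_closed)
  next
    case False
    then show ?thesis
      using g_in_gens_upto[of i "m - 1"] g_closed[of i] assms(1) 0 by (intro bexI[of _ "g i"]) auto
  qed
next
  case (Suc j)
  show ?case
  proof (cases "i = m")
    case True
    then show ?thesis
      using gens_upto_subgroup[of "m - 1"] g_closed[of m] assms(1) Suc.prems
      by (intro bexI[of _ \<one>]) (auto intro: subgroup.one_closed simp: m_assoc)
  next
    case False
    obtain k1 where k1: "k1 \<in> gens_upto (m - 1)" "g m [^] j \<otimes> g 1 = k1 \<otimes> g m [^] j"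
      using Suc.IH[of 1] Suc.prems by auto
    obtain k2 where k2: "k2 \<in> gens_upto (m - 1)"
      "g m [^] j \<otimes> g (Suc i) = k2 \<otimes> g m [^] (if Suc i + j < m then j else Suc j)"
      using Suc.IH[of "Suc i"] Suc.prems False by auto
    have sub: "subgroup (gens_upto (m - 1)) G"
      using assms(1) by (intro gens_upto_subgroup) simp
    have "g m [^] Suc j \<otimes> g i = (k1 \<otimes> k2) \<otimes> g m [^] Suc (if Suc i + j < m then j else Suc j)"
      using Suc.prems False assms(1) k1 k2 subgroup.mem_carrier[OF sub]
      by (intro pow_Suc_mult_g) auto
    moreover have "k1 \<otimes> k2 \<in> gens_upto (m - 1)"
      using subgroup.m_closed[OF sub k1(1) k2(1)] .
    ultimately show ?thesis
      by auto
  qed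
qed

lemma pow_mult_g_pow:
  assumes "m \<le> n" "1 \<le> i" "i < m" "t \<le> i"
  shows "\<exists>k\<in>gens_upto (m - 1). g m [^] (m - i) \<otimes> g i [^] t = k \<otimes> g m [^] (m - i + t)"
  using assms(4)
proof (induction t)
  case 0
  then show ?case
    using gens_upto_subgroup[of "m - 1"] g_closed[of m] assms
    by (intro bexI[of _ \<one>]) (auto intro: subgroup.one_closed)
next
  case (Suc t)
  define x where "x = g m"
  have sub: "subgroup (gens_upto (m - 1)) G"
    using assms(1) by (intro gens_upto_subgroup) simp
  have closed: "x \<in> carrier G" "g i \<in> carrier G"
    using g_closed assms unfolding x_def by auto
  obtain k where k: "k \<in> gens_upto (m - 1)" "x [^] (m - i) \<otimes> g i [^] t = k \<otimes> x [^] (m - i + t)"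
    using Suc unfolding x_def by auto
  have j_lt: "m - i + t < m" and no_wrap: "\<not> i + (m - i + t) < m"
    using assms(3) Suc.prems by simp_all
  have "\<exists>e\<in>gens_upto (m - 1). x [^] (m - i + t) \<otimes> g i = e \<otimes> x [^] Suc (m - i + t)"
    using pow_mult_g[OF assms(1,2) less_imp_le[OF assms(3)] j_lt] unfolding x_def
    by (simp only: no_wrap if_False)
  then obtain e where e: "e \<in> gens_upto (m - 1)" "x [^] (m - i + t) \<otimes> g i = e \<otimes> x [^] Suc (m - i + t)"
    by blast
  have "x [^] (m - i) \<otimes> g i [^] Suc t = (x [^] (m - i) \<otimes> g i [^] t) \<otimes> g i"
    using closed by (simp add: m_assoc)
  also have "\<dots> = k \<otimes> (x [^] (m - i + t) \<otimes> g i)"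
    using closed k subgroup.mem_carrier[OF sub] by (simp add: m_assoc)
  also have "\<dots> = (k \<otimes> e) \<otimes> x [^] (m - i + Suc t)"
    using closed k e subgroup.mem_carrier[OF sub] by (simp add: m_assoc)
  finally show ?case
    using subgroup.m_closed[OF sub k(1) e(1)] unfolding x_def by blast
qed

lemma pow_top_mult_g:
  assumes "m \<le> n" "1 \<le> i" "i < m"
  shows "\<exists>k\<in>gens_upto (m - 1). g m [^] m \<otimes> g i = k \<otimes> g m [^] (m - i)"
proof -
  define x where "x = g m"
  have sub: "subgroup (gens_upto (m - 1)) G"
    using assms(1) by (intro gens_upto_subgroup) simp
  have closed: "x \<in> carrier G" "g i \<in> carrier G"
    using g_closed assms unfolding x_def by auto
  obtain k where k: "k \<in> gens_upto (m - 1)" "x [^] (m - i) \<otimes> g i [^] i = k \<otimes> x [^] m"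
    using pow_mult_g_pow[of m i i] assms unfolding x_def by auto
  have k_closed: "k \<in> carrier G"
    using k(1) subgroup.mem_carrier[OF sub] by blast
  have "x [^] m \<otimes> g i = inv k \<otimes> (x [^] (m - i) \<otimes> g i [^] i) \<otimes> g i"
    using k(2) closed k_closed by (simp add: m_assoc[symmetric])
  also have "\<dots> = inv k \<otimes> (x [^] (m - i) \<otimes> g i [^] Suc i)"
    using closed k_closed by (simp add: m_assoc)
  also have "\<dots> = inv k \<otimes> x [^] (m - i)"
    using g_pow_order[of i] assms closed by simp
  finally show ?thesis
    using subgroup.m_inv_closed[OF sub k(1)] unfolding x_def by blast
qed

definition pow_cosets :: "nat \<Rightarrow> 'a set" where
  "pow_cosets m = (\<lambda>(k, j). k \<otimes> g m [^] j) ` (gens_upto (m - 1) \<times> {..m})"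

lemma pow_cosetsI: "k \<in> gens_upto (m - 1) \<Longrightarrow> j \<le> m \<Longrightarrow> k \<otimes> g m [^] j \<in> pow_cosets m"
  unfolding pow_cosets_def by force

lemma pow_cosets_carrier: "1 \<le> m \<Longrightarrow> m \<le> n \<Longrightarrow> pow_cosets m \<subseteq> carrier G"
  unfolding pow_cosets_def
  using subgroup.mem_carrier[OF gens_upto_subgroup[of "m - 1"]] g_closed[of m] by auto

lemma pow_mult_g_bounded:
  assumes "m \<le> n" "1 \<le> i" "i \<le> m" "j \<le> m"
  shows "\<exists>c\<in>gens_upto (m - 1). \<exists>e\<le>m. g m [^] j \<otimes> g i = c \<otimes> g m [^] e"
proof (cases "j < m")
  case True
  then obtain c where "c \<in> gens_upto (m - 1)"
    "g m [^] j \<otimes> g i = c \<otimes> g m [^] (if i + j < m then j else Suc j)"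
    using pow_mult_g[OF assms(1-3)] by blast
  moreover have "(if i + j < m then j else Suc j) \<le> m"
    using True by simp
  ultimately show ?thesis
    by blast
next
  case False
  then have j_top: "j = m"
    using assms(4) by simp
  show ?thesis
  proof (cases "i = m")
    case True
    have "g m [^] j \<otimes> g i = \<one> \<otimes> g m [^] (0::nat)"
      using j_top True g_pow_order[of m] assms g_closed[of m] by simp
    moreover have "\<one> \<in> gens_upto (m - 1)"
      using subgroup.one_closed[OF gens_upto_subgroup[of "m - 1"]] assms(1) by simp
    ultimately show ?thesis
      by blast
  next
    case False
    then have "i < m"
      using assms(3) by simp
    then obtain c where "c \<in> gens_upto (m - 1)" "g m [^] m \<otimes> g i = c \<otimes> g m [^] (m - i)"
      using pow_top_mult_g assms(1,2) by blast
    then show ?thesis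
      using j_top diff_le_self by blast
  qed
qed

lemma pow_cosets_mult_g:
  assumes "m \<le> n" "1 \<le> i" "i \<le> m" "z \<in> pow_cosets m"
  shows "z \<otimes> g i \<in> pow_cosets m"
proof -
  have sub: "subgroup (gens_upto (m - 1)) G"
    using assms(1) by (intro gens_upto_subgroup) simp
  obtain k j where k: "k \<in> gens_upto (m - 1)" and j: "j \<le> m" and z: "z = k \<otimes> g m [^] j"
    using assms(4) unfolding pow_cosets_def by auto
  obtain c e where c: "c \<in> gens_upto (m - 1)" and e: "e \<le> m"
    and shift: "g m [^] j \<otimes> g i = c \<otimes> g m [^] e"
    using pow_mult_g_bounded[OF assms(1-3) j] by blast
  have "z \<otimes> g i = (k \<otimes> c) \<otimes> g m [^] e"
    using z shift k c subgroup.mem_carrier[OF sub] g_closed assms by (simp add: m_assoc)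
  then show ?thesis
    using pow_cosetsI[OF subgroup.m_closed[OF sub k c] e] by simp
qed

lemma inv_g_eq_pow: "1 \<le> i \<Longrightarrow> i \<le> n \<Longrightarrow> inv (g i) = g i [^] i"
  using g_pow_order[of i] g_closed[of i] by (intro inv_equality) auto

lemma pow_cosets_mult_gens_upto:
  assumes "1 \<le> m" "m \<le> n" "y \<in> gens_upto m" "z \<in> pow_cosets m"
  shows "z \<otimes> y \<in> pow_cosets m"
  using assms(3,4) unfolding gens_upto_def
proof (induction y arbitrary: z rule: generate.induct)
  case one
  then show ?case
    using subsetD[OF pow_cosets_carrier[OF assms(1,2)]] by simp
next
  case (incl h)
  then show ?case
    using pow_cosets_mult_g assms by auto
next
  case (inv h)
  then obtain i where i: "1 \<le> i" "i \<le> m" "h = g i"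
    by auto
  have "z \<otimes> g i [^] t \<in> pow_cosets m" for t :: nat
  proof (induction t)
    case 0
    then show ?case
      using subsetD[OF pow_cosets_carrier[OF assms(1,2)]] inv.prems by simp
  next
    case (Suc t)
    then show ?case
      using pow_cosets_mult_g[OF _ i(1,2) Suc] subsetD[OF pow_cosets_carrier[OF assms(1,2)]]
        inv.prems g_closed[of i] i assms
      by (simp add: m_assoc)
  qed
  then show ?case
    using inv_g_eq_pow[of i] i assms by simp
next
  case (eng h1 h2)
  have "h1 \<in> carrier G" "h2 \<in> carrier G"
    using eng.hyps subgroup.mem_carrier[OF gens_upto_subgroup[OF assms(2)]]
    unfolding gens_upto_def by auto
  moreover have "z \<in> carrier G"
    using subsetD[OF pow_cosets_carrier[OF assms(1,2)]] eng.prems .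
  ultimately have "z \<otimes> (h1 \<otimes> h2) = (z \<otimes> h1) \<otimes> h2"
    by (simp add: m_assoc)
  then show ?case
    using eng.IH eng.prems by simp
qed

lemma gens_upto_subset_pow_cosets:
  assumes "1 \<le> m" "m \<le> n"
  shows "gens_upto m \<subseteq> pow_cosets m"
proof
  fix y
  assume y: "y \<in> gens_upto m"
  have "\<one> \<in> pow_cosets m"
    using pow_cosetsI[of \<one> m 0] subgroup.one_closed[OF gens_upto_subgroup[of "m - 1"]] assms g_closed[of m]
    by simp
  then have "\<one> \<otimes> y \<in> pow_cosets m"
    using pow_cosets_mult_gens_upto[OF assms y] by blast
  then show "y \<in> pow_cosets m"
    using subgroup.mem_carrier[OF gens_upto_subgroup[OF assms(2)] y] by simp
qed

lemma card_gens_upto: "m \<le> n \<Longrightarrow> finite (gens_upto m) \<and> card (gens_upto m) \<le> fact (Suc m)"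
proof (induction m)
  case 0
  have "gens_upto 0 = {\<one>}"
    unfolding gens_upto_def using generate_empty by simp
  then show ?case
    by simp
next
  case (Suc m)
  then have IH: "finite (gens_upto m)" "card (gens_upto m) \<le> fact (Suc m)"
    by auto
  have finite_cosets: "finite (pow_cosets (Suc m))"
    unfolding pow_cosets_def using IH(1) by (intro finite_imageI finite_cartesian_product) simp_all
  have "card (pow_cosets (Suc m)) \<le> card (gens_upto m \<times> {..Suc m})"
    unfolding pow_cosets_def diff_Suc_1 using IH by (intro card_image_le) simp
  also have "\<dots> = card (gens_upto m) * Suc (Suc m)"
    using IH by (simp add: card_cartesian_product)
  also have "\<dots> \<le> fact (Suc m) * Suc (Suc m)"
    using IH(2) by (rule mult_right_mono) simp
  also have "\<dots> = fact (Suc (Suc m))"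
    by (simp only: fact_Suc[of "Suc m"] mult.commute of_nat_id)
  finally have "card (pow_cosets (Suc m)) \<le> fact (Suc (Suc m))" .
  moreover have sub: "gens_upto (Suc m) \<subseteq> pow_cosets (Suc m)"
    using Suc.prems by (intro gens_upto_subset_pow_cosets) simp_all
  ultimately show ?case
    using card_mono[OF finite_cosets sub] finite_subset[OF sub finite_cosets] by simp
qed

end

lemma card_generate_pres_rels:
  assumes "group G" "1 \<le> n" "\<forall>i\<in>{1..n}. g i \<in> carrier G" "pres_rels G n g"
  shows "finite (generate G (g ` {1..n})) \<and> card (generate G (g ` {1..n})) \<le> fact (Suc n)"
proof -
  interpret pres_rels_group G n g
    using assms by (intro pres_rels_group.intro pres_rels_group_axioms.intro) auto
  show ?thesis
    using card_gens_upto[of n] by (simp add: gens_upto_def)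
qed

lemma pres_rels_DirProd:
  "pres_rels G n g \<Longrightarrow> pres_rels H n h \<Longrightarrow> pres_rels (G \<times>\<times> H) n (\<lambda>i. (g i, h i))"
  by (simp add: pres_rels_def)

lemma ex1_hom_from_sym_group:
  fixes H :: "('c, 'd) monoid_scheme"
  assumes "1 \<le> n" and H: "group H" and h: "\<forall>i\<in>{1..n}. h i \<in> carrier H"
    and rels: "pres_rels H n h"
  shows "\<exists>!\<phi>. \<phi> \<in> hom (sym_group (Suc n)) H
    \<and> (\<forall>x. x \<notin> carrier (sym_group (Suc n)) \<longrightarrow> \<phi> x = undefined) \<and> (\<forall>i\<in>{1..n}. \<phi> (rcyc i) = h i)"
proof -
  let ?S = "sym_group (Suc n)"
  have rcyc_closed: "\<forall>i\<in>{1..n}. rcyc i \<in> carrier ?S"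
    by (auto intro: rcyc_in_sym_group)
  have "group (?S \<times>\<times> H)"
    using sym_group_is_group H by (rule DirProd_group)
  moreover have "\<forall>i\<in>{1..n}. (rcyc i, h i) \<in> carrier (?S \<times>\<times> H)"
    using rcyc_closed h by simp
  ultimately have "finite (generate (?S \<times>\<times> H) ((\<lambda>i. (rcyc i, h i)) ` {1..n}))
      \<and> card (generate (?S \<times>\<times> H) ((\<lambda>i. (rcyc i, h i)) ` {1..n})) \<le> order ?S"
    using card_generate_pres_rels[OF _ assms(1) _ pres_rels_DirProd[OF rcyc_pres_rels rels]]
    by (simp add: order_def sym_group_card_carrier)
  then obtain f where "f \<in> hom ?S H" "\<forall>i\<in>{1..n}. f (rcyc i) = h i"
    using ex_hom_of_small_graph[where h = h, OF sym_group_is_group H _ _ generate_rcyc[of n]]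
      rcyc_closed h
    by auto
  then show ?thesis
    using rcyc_closed by (intro ex1_extensional_hom[OF sym_group_is_group H _ generate_rcyc[of n]]) auto
qed

theorem corollary5p3:
  fixes n :: nat
  assumes "n \<ge> 1"
  shows "(\<forall>i\<in>{1..n}. rcyc i \<in> carrier (sym_group (n + 1)))
       \<and> pres_rels (sym_group (n + 1)) n rcyc
       \<and> generate (sym_group (n + 1)) (rcyc ` {1..n}) = carrier (sym_group (n + 1))
       \<and> (\<forall>(H :: ('c, 'd) monoid_scheme) (h :: nat \<Rightarrow> 'c).
            group H \<and> (\<forall>i\<in>{1..n}. h i \<in> carrier H) \<and> pres_rels H n h \<longrightarrow>
            (\<exists>!\<phi>. \<phi> \<in> hom (sym_group (n + 1)) H
                    \<and> (\<forall>x. x \<notin> carrier (sym_group (n + 1)) \<longrightarrow> \<phi> x = undefined)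
                    \<and> (\<forall>i\<in>{1..n}. \<phi> (rcyc i) = h i)))"
proof -
  have "\<forall>i\<in>{1..n}. rcyc i \<in> carrier (sym_group (Suc n))"
    by (auto intro: rcyc_in_sym_group)
  then show ?thesis
    unfolding Suc_eq_plus1[symmetric]
    using rcyc_pres_rels generate_rcyc ex1_hom_from_sym_group[OF assms] by blast
qed

end
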